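(* Let $d\ge2$, $0<s<d$, regard $\mathbb{R}^d$ as $\mathbb{R}^d\times\{0\}\subset\mathbb{R}^{d+1}$, and let $y=(y_1,\dots,y_{d+1})\in\mathbb{R}^{d+1}$ with $y_{d+1}\ne0$. The weak balayage $\delta_y^w$ of $\delta_y$ onto $\mathbb{R}^d$ is given by $$d\delta_y^w(x)=\frac{(2|y_{d+1}|)^{d-s}}{\omega_d\,W(S^d)\,|x-y|^{2d-s}}\,dx,$$ where $dx$ is Lebesgue measure on $\mathbb{R}^d$, and $\|\delta_y^w\|=\|\delta_y\|=1$. Furthermore, if $\nu$ is a signed measure of finite mass with support in $\mathbb{R}^{d+1}\setminus\mathbb{R}^d$ (not necessarily compact), its weak balayage is given by the superposition $$d\nu^w(x)=\Bigl(\int_{S_\nu}\delta_y^w(x)\,d\nu(y)\Bigr)dx,$$ where $\delta_y^w(x)$ denotes the density above.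
   Context: $U^\sigma(x)=\int|x-t|^{-s}d\sigma(t)$ for measures on $\mathbb{R}^{d+1}$. For a positive measure $\sigma$ of finite mass, a weak balayage $\sigma^w$ onto $\mathbb{R}^d$ is a positive measure on $\mathbb{R}^d$ with $U^{\sigma^w}=U^\sigma$ quasi-everywhere on $\mathbb{R}^d$ (i.e. outside a set of zero Riesz $s$-capacity); for a signed measure $\nu=\nu^+-\nu^-$, $\nu^w=(\nu^+)^w-(\nu^-)^w$. $\omega_d=2\pi^{(d+1)/2}/\Gamma((d+1)/2)$ is the surface area of the unit sphere $S^d\subset\mathbb{R}^{d+1}$, and $W(S^d)$ is its Riesz $s$-energy: $W(S^d)=\frac{\Gamma(\frac{d+1}{2})\Gamma(d-s)}{\Gamma(\frac{d-s+1}{2})\Gamma(d-\frac{s}{2})}$ for $d\ge3$, and $W(S^2)=2^{1-s}/(2-s)$ for $d=2$. $S_\nu$ is the support of $\nu$. *)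

theory Defs
  imports "HOL-Analysis.Analysis" "HOL-Probability.Giry_Monad"
begin

text \<open>R^d is real^'n with d = CARD('n); R^(d+1) is (real^'n) \<times> real, whose product
  norm is the Euclidean one; R^d is embedded as x \<mapsto> (x, 0).\<close>

definition emb :: "real^'n \<Rightarrow> (real^'n) \<times> real" where
  "emb x = (x, 0)"

definition riesz_kernel :: "real \<Rightarrow> 'a::metric_space \<Rightarrow> 'a \<Rightarrow> ennreal" where
  "riesz_kernel s x t = (if x = t then \<infinity> else ennreal (dist x t powr (-s)))"

definition riesz_pot :: "real \<Rightarrow> 'a::metric_space measure \<Rightarrow> 'a \<Rightarrow> ennreal" where
  "riesz_pot s \<mu> x = (\<integral>\<^sup>+ t. riesz_kernel s x t \<partial>\<mu>)"

definition riesz_energy :: "real \<Rightarrow> 'a::metric_space measure \<Rightarrow> ennreal" where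
  "riesz_energy s \<mu> = (\<integral>\<^sup>+ x. (\<integral>\<^sup>+ t. riesz_kernel s x t \<partial>\<mu>) \<partial>\<mu>)"

definition riesz_cap_zero :: "real \<Rightarrow> (real^'n) set \<Rightarrow> bool" where
  "riesz_cap_zero s E \<longleftrightarrow>
     (\<forall>K (\<mu> :: (real^'n) measure). compact K \<and> K \<subseteq> E \<and> sets \<mu> = sets borel \<and>
        emeasure \<mu> UNIV < \<infinity> \<and> emeasure \<mu> (UNIV - K) = 0 \<and> riesz_energy s \<mu> < \<infinity>
        \<longrightarrow> emeasure \<mu> UNIV = 0)"

definition weak_balayage ::
  "real \<Rightarrow> ((real^'n) \<times> real) measure \<Rightarrow> (real^'n) measure \<Rightarrow> bool" where
  "weak_balayage s \<sigma> \<mu> \<longleftrightarrow> sets \<mu> = sets borel \<and>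
     riesz_cap_zero s {x. riesz_pot s \<mu> x \<noteq> riesz_pot s \<sigma> (emb x)}"

definition msupport :: "'a::topological_space measure \<Rightarrow> 'a set" where
  "msupport \<mu> = {z. \<forall>U. open U \<and> z \<in> U \<longrightarrow> emeasure \<mu> U > 0}"

definition omega_d :: "nat \<Rightarrow> real" where
  "omega_d d = 2 * pi powr ((real d + 1) / 2) / Gamma ((real d + 1) / 2)"

definition W_sphere :: "nat \<Rightarrow> real \<Rightarrow> real" where
  "W_sphere d s = (if d = 2 then 2 powr (1 - s) / (2 - s)
     else Gamma ((real d + 1) / 2) * Gamma (real d - s) /
          (Gamma ((real d - s + 1) / 2) * Gamma (real d - s / 2)))"

definition bal_density :: "real \<Rightarrow> (real^'n) \<times> real \<Rightarrow> real^'n \<Rightarrow> real" where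
  "bal_density s y x = (2 * \<bar>snd y\<bar>) powr (real CARD('n) - s) /
     (omega_d CARD('n) * W_sphere CARD('n) s * dist (emb x) y powr (2 * real CARD('n) - s))"

definition delta_w :: "real \<Rightarrow> (real^'n) \<times> real \<Rightarrow> (real^'n) measure" where
  "delta_w s y = density lborel (\<lambda>x. ennreal (bal_density s y x))"

end

(*
  For y = (y', h) with h \<noteq> 0 the density is c |h| powr (d - s) (|x - y'|^2 + h^2) powr (-(d - s/2)),
  and Legendre's duplication formula turns omega_d * W(S^d) into 2 powr (d - s) times the
  normalising constant c^-1.  Writing both (|t - y'|^2 + h^2) powr (-(d - s/2)) and
  |x - t| powr (-s) as Gamma-function mixtures of Gaussians makes every integral over R^d
  Gaussian; after the substitution u = v q of the two mixing parameters what remains are Gamma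
  and Beta integrals, and they give, for every x \<in> R^d,

    \<integral> bal_density s y t * |x - t| powr (-s) dt = |(x, 0) - y| powr (-s),
    \<integral> bal_density s y t dt = 1.

  So the potentials agree everywhere on R^d and the exceptional set is empty.  For a finite
  measure \<nu> whose support misses R^d, \<nu>-almost every y lies off R^d, and Tonelli's theorem
  carries both identities over to the superposition of the densities.
*)
theory Submission
  imports Defs "HOL-Probability.Distributions"
begin

lemma power2_powr_half: "((x::real)^2) powr (r / 2) = \<bar>x\<bar> powr r"
proof (cases "x = 0")
  case False
  then have "(x^2) powr (r / 2) = (\<bar>x\<bar> powr 2) powr (r / 2)" by simp
  also have "\<dots> = \<bar>x\<bar> powr (2 * (r / 2))" by (rule powr_powr)
  finally show ?thesis by simp
qed simp

lemma nn_integral_ennreal_cmult: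
  fixes f :: "'a \<Rightarrow> real"
  assumes "c \<ge> 0" and "f \<in> borel_measurable M"
  shows "(\<integral>\<^sup>+x. ennreal (c * f x) \<partial>M) = ennreal c * (\<integral>\<^sup>+x. ennreal (f x) \<partial>M)"
  using assms by (simp add: ennreal_mult' nn_integral_cmult)

section \<open>Gaussian integrals\<close>

lemma nn_integral_gaussian:
  fixes c m :: real assumes c: "c > 0"
  shows "(\<integral>\<^sup>+t. ennreal (exp (-(c * (t - m)^2))) \<partial>lborel) = ennreal (sqrt (pi / c))"
proof -
  define \<sigma> where "\<sigma> = sqrt (1 / (2 * c))"
  have \<sigma>: "\<sigma> > 0" "2 * \<sigma>^2 = 1 / c" using c by (auto simp: \<sigma>_def)
  have "exp (-(c * (t - m)^2)) = sqrt (pi / c) * normal_density m \<sigma> t" for t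
  proof -
    have "sqrt (2 * pi * \<sigma>^2) = sqrt (pi / c)" "- ((t - m)^2) / (2 * \<sigma>^2) = - (c * (t - m)^2)"
      using \<sigma> c by (simp_all add: field_simps)
    then show ?thesis using c by (simp add: normal_density_def)
  qed
  then have "(\<integral>\<^sup>+t. ennreal (exp (-(c * (t - m)^2))) \<partial>lborel)
      = (\<integral>\<^sup>+t. ennreal (sqrt (pi / c) * normal_density m \<sigma> t) \<partial>lborel)"
    by simp
  also have "\<dots> = ennreal (sqrt (pi / c)) * (\<integral>\<^sup>+t. ennreal (normal_density m \<sigma> t) \<partial>lborel)"
    by (rule nn_integral_ennreal_cmult) (use c in auto)
  also have "(\<integral>\<^sup>+t. ennreal (normal_density m \<sigma> t) \<partial>lborel) = 1"
    using \<sigma>(1) by (subst nn_integral_eq_integral) auto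
  finally show ?thesis by simp
qed

lemma nn_integral_gaussian_product_real:
  fixes u v a b :: real assumes u: "u \<ge> 0" and v: "v > 0"
  shows "(\<integral>\<^sup>+t. ennreal (exp (-(u * (a - t)^2 + v * (t - b)^2))) \<partial>lborel)
     = ennreal (sqrt (pi / (u + v)) * exp (-(u * v / (u + v) * (a - b)^2)))"
proof -
  define m where "m = (u * a + v * b) / (u + v)"
  have uv: "u + v > 0" using u v by simp
  have square: "u * (a - t)^2 + v * (t - b)^2 = (u + v) * (t - m)^2 + u * v / (u + v) * (a - b)^2" for t
  proof -
    have e1: "(u + v) * (u * (a - t)^2 + v * (t - b)^2)
        = ((u + v) * t - (u * a + v * b))^2 + u * v * (a - b)^2"
      by algebra
    have e2: "(u + v) * t - (u * a + v * b) = (u + v) * (t - m)"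
      using uv by (simp add: m_def field_simps)
    have "(u + v) * (u * (a - t)^2 + v * (t - b)^2)
        = (u + v) * ((u + v) * (t - m)^2 + u * v / (u + v) * (a - b)^2)"
      unfolding e1 e2 using uv by (simp add: field_simps power2_eq_square)
    then show ?thesis using uv by simp
  qed
  have "(\<integral>\<^sup>+t. ennreal (exp (-(u * (a - t)^2 + v * (t - b)^2))) \<partial>lborel)
      = (\<integral>\<^sup>+t. ennreal (exp (-(u * v / (u + v) * (a - b)^2)) * exp (-((u + v) * (t - m)^2))) \<partial>lborel)"
    by (simp add: square exp_add[symmetric] algebra_simps)
  also have "\<dots> = ennreal (exp (-(u * v / (u + v) * (a - b)^2))) * ennreal (sqrt (pi / (u + v)))"
    by (subst nn_integral_ennreal_cmult) (auto simp: nn_integral_gaussian[OF uv])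
  finally show ?thesis by (simp add: ennreal_mult''[symmetric] mult.commute)
qed

lemma nn_integral_gaussian_product:
  fixes x y :: "'a::euclidean_space" and u v :: real
  assumes u: "u \<ge> 0" and v: "v > 0"
  shows "(\<integral>\<^sup>+t. ennreal (exp (-(u * (norm (x - t))^2 + v * (norm (t - y))^2))) \<partial>lborel)
     = ennreal ((pi / (u + v)) powr (DIM('a) / 2) * exp (-(u * v / (u + v) * (norm (x - y))^2)))"
proof -
  have norm_sq: "(norm z)^2 = (\<Sum>b\<in>Basis. (z \<bullet> b)^2)" for z :: 'a
    by (subst power2_norm_eq_inner, subst euclidean_inner) (simp add: power2_eq_square)
  have "ennreal (exp (-(u * (norm (x - t))^2 + v * (norm (t - y))^2)))
      = (\<Prod>b\<in>Basis. ennreal (exp (-(u * (x \<bullet> b - t \<bullet> b)^2 + v * (t \<bullet> b - y \<bullet> b)^2))))" for t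
  proof -
    have "-(u * (norm (x - t))^2 + v * (norm (t - y))^2)
        = (\<Sum>b\<in>Basis. -(u * (x \<bullet> b - t \<bullet> b)^2 + v * (t \<bullet> b - y \<bullet> b)^2))"
      by (simp add: norm_sq sum_distrib_left sum.distrib sum_negf sum_subtractf inner_diff_left)
    then show ?thesis by (simp add: prod_ennreal exp_sum)
  qed
  then have "(\<integral>\<^sup>+t. ennreal (exp (-(u * (norm (x - t))^2 + v * (norm (t - y))^2))) \<partial>lborel)
      = (\<Prod>b\<in>Basis. \<integral>\<^sup>+z. ennreal (exp (-(u * (x \<bullet> b - z)^2 + v * (z - y \<bullet> b)^2))) \<partial>lborel)"
    by (simp only:) (rule nn_integral_lborel_prod, auto)
  also have "\<dots> = (\<Prod>b\<in>Basis. ennreal (sqrt (pi / (u + v)) * exp (-(u * v / (u + v) * (x \<bullet> b - y \<bullet> b)^2))))"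
    by (intro prod.cong refl nn_integral_gaussian_product_real u v)
  also have "\<dots> = ennreal (sqrt (pi / (u + v)) ^ DIM('a) * exp (-(u * v / (u + v) * (norm (x - y))^2)))"
    using u v by (simp add: prod_ennreal prod.distrib exp_sum[symmetric] norm_sq sum_distrib_left
        sum_negf inner_diff_left)
  also have "sqrt (pi / (u + v)) ^ DIM('a) = (pi / (u + v)) powr (DIM('a) / 2)"
    using u v by (simp add: sqrt_def root_powr_inverse powr_realpow[symmetric] powr_powr)
  finally show ?thesis .
qed

lemma nn_integral_gaussian_euclidean:
  fixes y :: "'a::euclidean_space" and v :: real assumes v: "v > 0"
  shows "(\<integral>\<^sup>+t. ennreal (exp (-(v * (norm (t - y))^2))) \<partial>lborel) = ennreal ((pi / v) powr (DIM('a) / 2))"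
  using nn_integral_gaussian_product[of 0 v y y] v by simp

section \<open>Gamma and Beta integrals\<close>

lemma nn_integral_Gamma_kernel:
  fixes c l :: real assumes c: "c > 0" and l: "l > 0"
  shows "(\<integral>\<^sup>+w. ennreal (indicator {0<..} w * (w powr (c - 1) * exp (-(l * w)))) \<partial>lborel)
       = ennreal (Gamma c * l powr (-c))"
proof -
  let ?g = "\<lambda>w. ennreal (indicator {0<..} w * (w powr (c - 1) * exp (-(l * w))))"
  have "(\<integral>\<^sup>+w. ?g w \<partial>lborel) = ennreal (1 / l) * (\<integral>\<^sup>+w. ?g (0 + (1 / l) * w) \<partial>lborel)"
    using l by (subst nn_integral_real_affine[where c = "1 / l" and t = 0]) auto
  also have "(\<lambda>w. ?g (0 + (1 / l) * w))
      = (\<lambda>w. ennreal (l powr (1 - c) * (indicator {0..} w * w powr (c - 1) / exp w)))"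
    using l by (auto simp: fun_eq_iff indicator_def powr_divide powr_diff exp_minus field_simps)
  also have "(\<integral>\<^sup>+w. ennreal (l powr (1 - c) * (indicator {0..} w * w powr (c - 1) / exp w)) \<partial>lborel)
      = ennreal (l powr (1 - c)) * ennreal (Gamma c)"
    unfolding Gamma_conv_nn_integral_real[OF c] by (rule nn_integral_ennreal_cmult) auto
  also have "ennreal (1 / l) * (ennreal (l powr (1 - c)) * ennreal (Gamma c))
      = ennreal (Gamma c * l powr (-c))"
    using l c by (simp add: ennreal_mult''[symmetric] powr_diff powr_minus field_simps)
  finally show ?thesis .
qed

lemma powr_neg_eq_Gamma_integral:
  fixes c z :: real assumes c: "c > 0" and z: "z > 0"
  shows "ennreal (z powr (-c)) = ennreal (1 / Gamma c) *
      (\<integral>\<^sup>+w. ennreal (indicator {0<..} w * (w powr (c - 1) * exp (-(z * w)))) \<partial>lborel)"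
  using Gamma_real_pos[OF c, THEN less_imp_neq] c z
  by (simp add: nn_integral_Gamma_kernel ennreal_mult''[symmetric])

lemma nn_integral_Beta_second_kind:
  fixes b c H L :: real assumes b: "0 < b" "b < c" and H: "H > 0" and L: "L > 0"
  shows "(\<integral>\<^sup>+q. ennreal (indicator {0<..} q * (q powr (b - 1) * (H + L * q) powr (-c))) \<partial>lborel)
       = ennreal (Gamma b * Gamma (c - b) / Gamma c * L powr (-b) * H powr (-(c - b)))"
proof -
  let ?f = "\<lambda>q w. ennreal (indicator {0<..} q * indicator {0<..} w *
     (q powr (b - 1) * w powr (c - 1) * exp (-((H + L * q) * w))))"
  have Gamma_pos: "Gamma b > 0" "Gamma (c - b) > 0" "Gamma c > 0"
    using b by (auto intro: Gamma_real_pos)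
  have "(\<integral>\<^sup>+q. ennreal (indicator {0<..} q * (q powr (b - 1) * (H + L * q) powr (-c))) \<partial>lborel)
      = (\<integral>\<^sup>+q. ennreal (1 / Gamma c) * (\<integral>\<^sup>+w. ?f q w \<partial>lborel) \<partial>lborel)"
  proof (intro nn_integral_cong)
    fix q :: real
    show "ennreal (indicator {0<..} q * (q powr (b - 1) * (H + L * q) powr (-c)))
        = ennreal (1 / Gamma c) * (\<integral>\<^sup>+w. ?f q w \<partial>lborel)"
    proof (cases "q > 0")
      case True
      then have "H + L * q > 0" using H L by (simp add: add_pos_pos)
      have "?f q w = ennreal (q powr (b - 1)) *
          ennreal (indicator {0<..} w * (w powr (c - 1) * exp (-((H + L * q) * w))))" for w
      proof -
        have "indicator {0<..} q * indicator {0<..} w *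
              (q powr (b - 1) * w powr (c - 1) * exp (-((H + L * q) * w)))
            = q powr (b - 1) * (indicator {0<..} w * (w powr (c - 1) * exp (-((H + L * q) * w))))"
          using True by simp
        then show ?thesis by (simp only: ennreal_mult'[OF powr_ge_zero])
      qed
      then have "(\<integral>\<^sup>+w. ?f q w \<partial>lborel)
          = ennreal (q powr (b - 1)) * ennreal (Gamma c * (H + L * q) powr (-c))"
        using \<open>H + L * q > 0\<close> b by (simp add: nn_integral_cmult nn_integral_Gamma_kernel)
      with True Gamma_pos show ?thesis
        by (simp add: ennreal_mult''[symmetric])
    qed simp
  qed
  also have "\<dots> = ennreal (1 / Gamma c) * (\<integral>\<^sup>+q. \<integral>\<^sup>+w. ?f q w \<partial>lborel \<partial>lborel)"
    by (rule nn_integral_cmult) measurable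
  also have "(\<integral>\<^sup>+q. \<integral>\<^sup>+w. ?f q w \<partial>lborel \<partial>lborel) = (\<integral>\<^sup>+w. \<integral>\<^sup>+q. ?f q w \<partial>lborel \<partial>lborel)"
    by (rule lborel_pair.Fubini') measurable
  also have "(\<integral>\<^sup>+w. \<integral>\<^sup>+q. ?f q w \<partial>lborel \<partial>lborel)
      = (\<integral>\<^sup>+w. ennreal (Gamma b * L powr (-b)) *
           ennreal (indicator {0<..} w * (w powr (c - b - 1) * exp (-(H * w)))) \<partial>lborel)"
  proof (intro nn_integral_cong)
    fix w :: real
    show "(\<integral>\<^sup>+q. ?f q w \<partial>lborel) = ennreal (Gamma b * L powr (-b)) *
           ennreal (indicator {0<..} w * (w powr (c - b - 1) * exp (-(H * w))))"
    proof (cases "w > 0")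
      case w: True
      have "?f q w = ennreal (w powr (c - 1) * exp (-(H * w))) *
          ennreal (indicator {0<..} q * (q powr (b - 1) * exp (-((w * L) * q))))" for q
        using w by (simp add: ennreal_mult''[symmetric] exp_add[symmetric] algebra_simps)
      then have "(\<integral>\<^sup>+q. ?f q w \<partial>lborel)
          = ennreal (w powr (c - 1) * exp (-(H * w))) * ennreal (Gamma b * (w * L) powr (-b))"
        using w L b by (simp add: nn_integral_cmult nn_integral_Gamma_kernel)
      also have "w powr (c - 1) * (w * L) powr (-b) = w powr (c - b - 1) * L powr (-b)"
        using w L by (simp add: powr_mult powr_add[symmetric] algebra_simps)
      ultimately show ?thesis
        using w L Gamma_pos by (simp add: ennreal_mult''[symmetric] mult_ac)
    qed simp
  qed
  also have "\<dots> = ennreal (Gamma b * L powr (-b)) * ennreal (Gamma (c - b) * H powr (-(c - b)))"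
    using b H by (simp add: nn_integral_cmult nn_integral_Gamma_kernel)
  finally show ?thesis
    using Gamma_pos by (simp add: ennreal_mult''[symmetric] mult_ac)
qed

section \<open>Integrals of powers of |t - y|^2 + H\<close>

lemma nn_integral_shifted_square_powr_Gamma_mixture:
  fixes y :: "'a::euclidean_space" and g :: "'a \<Rightarrow> ennreal" and a H :: real
  assumes g[measurable]: "g \<in> borel_measurable borel" and a: "a > 0" and H: "H > 0"
  shows "(\<integral>\<^sup>+t. ennreal (((norm (t - y))^2 + H) powr (-a)) * g t \<partial>lborel)
    = ennreal (1 / Gamma a) * (\<integral>\<^sup>+v. ennreal (indicator {0<..} v * (v powr (a - 1) * exp (-(H * v)))) *
        (\<integral>\<^sup>+t. ennreal (exp (-(v * (norm (t - y))^2))) * g t \<partial>lborel) \<partial>lborel)"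
proof -
  let ?w = "\<lambda>v. ennreal (indicator {0<..} v * (v powr (a - 1) * exp (-(H * v))))"
  let ?f = "\<lambda>t v. ?w v * (ennreal (exp (-(v * (norm (t - y))^2))) * g t)"
  have "ennreal (((norm (t - y))^2 + H) powr (-a)) * g t
      = ennreal (1 / Gamma a) * (\<integral>\<^sup>+v. ?f t v \<partial>lborel)" for t
  proof -
    have split: "indicator {0<..} v * (v powr (a - 1) * exp (-(((norm (t - y))^2 + H) * v)))
        = indicator {0<..} v * (v powr (a - 1) * exp (-(H * v))) * exp (-(v * (norm (t - y))^2))" for v
      by (simp add: exp_add[symmetric] algebra_simps)
    have "ennreal (((norm (t - y))^2 + H) powr (-a)) = ennreal (1 / Gamma a) *
        (\<integral>\<^sup>+v. ennreal (indicator {0<..} v * (v powr (a - 1) * exp (-(((norm (t - y))^2 + H) * v)))) \<partial>lborel)"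
      using a H by (intro powr_neg_eq_Gamma_integral) (auto intro: add_nonneg_pos)
    also have "\<dots> = ennreal (1 / Gamma a) * (\<integral>\<^sup>+v. ?w v * ennreal (exp (-(v * (norm (t - y))^2))) \<partial>lborel)"
      by (simp only: split ennreal_mult''[OF exp_ge_zero])
    finally have "ennreal (((norm (t - y))^2 + H) powr (-a))
        = ennreal (1 / Gamma a) * (\<integral>\<^sup>+v. ?w v * ennreal (exp (-(v * (norm (t - y))^2))) \<partial>lborel)" .
    then show ?thesis
      using g by (simp add: nn_integral_multc[symmetric] mult.assoc)
  qed
  then have "(\<integral>\<^sup>+t. ennreal (((norm (t - y))^2 + H) powr (-a)) * g t \<partial>lborel)
      = ennreal (1 / Gamma a) * (\<integral>\<^sup>+t. \<integral>\<^sup>+v. ?f t v \<partial>lborel \<partial>lborel)"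
    using g by (simp add: nn_integral_cmult)
  also have "(\<integral>\<^sup>+t. \<integral>\<^sup>+v. ?f t v \<partial>lborel \<partial>lborel) = (\<integral>\<^sup>+v. \<integral>\<^sup>+t. ?f t v \<partial>lborel \<partial>lborel)"
    using g by (intro lborel_pair.Fubini') measurable
  also have "\<dots> = (\<integral>\<^sup>+v. ?w v * (\<integral>\<^sup>+t. ennreal (exp (-(v * (norm (t - y))^2))) * g t \<partial>lborel) \<partial>lborel)"
    using g by (simp add: nn_integral_cmult)
  finally show ?thesis .
qed

lemma nn_integral_shifted_square_powr:
  fixes y :: "'a::euclidean_space" and a H :: real
  assumes a: "DIM('a) / 2 < a" and H: "H > 0"
  shows "(\<integral>\<^sup>+t. ennreal (((norm (t - y))^2 + H) powr (-a)) \<partial>lborel)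
    = ennreal (pi powr (DIM('a) / 2) * Gamma (a - DIM('a) / 2) / Gamma a * H powr (-(a - DIM('a) / 2)))"
proof -
  define D where "D = DIM('a) / 2"
  have "D > 0" by (simp add: D_def)
  with a have Gamma_pos: "Gamma a > 0" "Gamma (a - D) > 0" by (auto simp: D_def intro: Gamma_real_pos)
  have "(\<integral>\<^sup>+t. ennreal (((norm (t - y))^2 + H) powr (-a)) \<partial>lborel)
      = ennreal (1 / Gamma a) * (\<integral>\<^sup>+v. ennreal (indicator {0<..} v * (v powr (a - 1) * exp (-(H * v)))) *
          (\<integral>\<^sup>+t. ennreal (exp (-(v * (norm (t - y))^2))) \<partial>lborel) \<partial>lborel)"
    using nn_integral_shifted_square_powr_Gamma_mixture[of "\<lambda>_. 1" a H y] a H \<open>D > 0\<close>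
    by (simp add: D_def)
  also have "\<dots> = ennreal (1 / Gamma a) * (\<integral>\<^sup>+v. ennreal (pi powr D) *
      ennreal (indicator {0<..} v * (v powr (a - D - 1) * exp (-(H * v)))) \<partial>lborel)"
  proof -
    have "ennreal (indicator {0<..} v * (v powr (a - 1) * exp (-(H * v)))) *
          (\<integral>\<^sup>+t. ennreal (exp (-(v * (norm (t - y))^2))) \<partial>lborel)
        = ennreal (pi powr D) * ennreal (indicator {0<..} v * (v powr (a - D - 1) * exp (-(H * v))))" for v
    proof (cases "v > 0")
      case True
      have "indicator {0<..} v * (v powr (a - 1) * exp (-(H * v))) * (pi / v) powr D
          = pi powr D * (indicator {0<..} v * (v powr (a - D - 1) * exp (-(H * v))))"
        using True by (simp add: powr_divide powr_diff powr_mult_base field_simps)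
      then show ?thesis
        using True by (simp add: nn_integral_gaussian_euclidean D_def flip: ennreal_mult'' ennreal_mult')
    qed simp
    then show ?thesis by (simp only:)
  qed
  also have "\<dots> = ennreal (1 / Gamma a) * (ennreal (pi powr D) * ennreal (Gamma (a - D) * H powr (-(a - D))))"
    using a H by (simp add: nn_integral_cmult nn_integral_Gamma_kernel D_def)
  finally show ?thesis
    using Gamma_pos by (simp add: ennreal_mult''[symmetric] D_def mult_ac)
qed

lemma nn_integral_Gamma_weighted_gaussian_product:
  fixes x y :: "'a::euclidean_space" and b v :: real
  assumes v: "v > 0"
  shows "(\<integral>\<^sup>+u. \<integral>\<^sup>+t. ennreal (indicator {0<..} u * (u powr (b - 1) *
            exp (-(u * (norm (x - t))^2 + v * (norm (t - y))^2)))) \<partial>lborel \<partial>lborel)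
       = (\<integral>\<^sup>+q. ennreal (indicator {0<..} q * (pi powr (DIM('a) / 2) * v powr (b - DIM('a) / 2) *
            q powr (b - 1) * (1 + q) powr (-(DIM('a) / 2)) *
            exp (-(v * q / (1 + q) * (norm (x - y))^2)))) \<partial>lborel)"
    (is "_ = (\<integral>\<^sup>+q. ennreal (?g q) \<partial>lborel)")
proof -
  define D where "D = DIM('a) / 2"
  define K where "K = (norm (x - y))^2"
  let ?h = "\<lambda>u. indicator {0<..} u *
    (u powr (b - 1) * ((pi / (u + v)) powr D * exp (-(u * v / (u + v) * K))))"
  have "(\<integral>\<^sup>+u. \<integral>\<^sup>+t. ennreal (indicator {0<..} u * (u powr (b - 1) *
            exp (-(u * (norm (x - t))^2 + v * (norm (t - y))^2)))) \<partial>lborel \<partial>lborel)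
      = (\<integral>\<^sup>+u. ennreal (?h u) \<partial>lborel)"
  proof (rule nn_integral_cong)
    fix u :: real
    show "(\<integral>\<^sup>+t. ennreal (indicator {0<..} u * (u powr (b - 1) *
            exp (-(u * (norm (x - t))^2 + v * (norm (t - y))^2)))) \<partial>lborel) = ennreal (?h u)"
    proof (cases "u > 0")
      case True
      then have "(\<integral>\<^sup>+t. ennreal (indicator {0<..} u * (u powr (b - 1) *
            exp (-(u * (norm (x - t))^2 + v * (norm (t - y))^2)))) \<partial>lborel)
          = ennreal (u powr (b - 1)) *
            (\<integral>\<^sup>+t. ennreal (exp (-(u * (norm (x - t))^2 + v * (norm (t - y))^2))) \<partial>lborel)"
        by (subst nn_integral_ennreal_cmult[symmetric]) (simp_all, measurable)
      also have "\<dots> = ennreal (?h u)"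
        unfolding nn_integral_gaussian_product[OF less_imp_le[OF True] v]
        using True by (simp add: ennreal_mult'[symmetric] D_def K_def)
      finally show ?thesis .
    qed simp
  qed
  also have "\<dots> = ennreal v * (\<integral>\<^sup>+q. ennreal (?h (0 + v * q)) \<partial>lborel)"
    using v by (subst nn_integral_real_affine[where c = v and t = 0]) auto
  also have "\<dots> = (\<integral>\<^sup>+q. ennreal (v * ?h (v * q)) \<partial>lborel)"
    using v by (subst nn_integral_ennreal_cmult) auto
  also have "\<dots> = (\<integral>\<^sup>+q. ennreal (?g q) \<partial>lborel)"
  proof (rule nn_integral_cong)
    fix q :: real
    show "ennreal (v * ?h (v * q)) = ennreal (?g q)"
    proof (cases "q > 0")
      case q: True
      have "v * (v * q) powr (b - 1) * (pi / (v * q + v)) powr D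
          = pi powr D * v powr (b - D) * q powr (b - 1) * (1 + q) powr (-D)"
      proof -
        have "(pi / (v * q + v)) powr D = pi powr D * v powr (-D) * (1 + q) powr (-D)"
        proof -
          have "v * q + v = v * (1 + q)" by (simp add: algebra_simps)
          then show ?thesis using v q by (simp add: powr_divide powr_mult powr_minus_divide)
        qed
        moreover have "v * (v * q) powr (b - 1) * v powr (-D) = v powr (b - D) * q powr (b - 1)"
          using v q by (simp add: powr_mult powr_add[symmetric] powr_mult_base mult_ac)
        ultimately show ?thesis by (simp add: mult_ac)
      qed
      moreover have "v * q * v / (v * q + v) = v * q / (1 + q)"
      proof -
        have "v * q + v \<noteq> 0" using v q by (metis add_pos_pos less_irrefl mult_pos_pos)
        then show ?thesis using v q by (simp add: field_simps)
      qed
      ultimately show ?thesis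
        using v q by (simp add: D_def K_def mult_ac)
    qed (use v in \<open>simp add: zero_less_mult_iff\<close>)
  qed
  finally show ?thesis .
qed

lemma nn_integral_gaussian_riesz_kernel:
  fixes x y :: "'a::euclidean_space" and b v :: real
  assumes b: "b > 0" and v: "v > 0"
  shows "(\<integral>\<^sup>+t. ennreal (exp (-(v * (norm (t - y))^2))) * ennreal (norm (x - t) powr (-(2 * b))) \<partial>lborel)
       = ennreal (1 / Gamma b) * (\<integral>\<^sup>+q. ennreal (indicator {0<..} q * (pi powr (DIM('a) / 2) *
            v powr (b - DIM('a) / 2) * q powr (b - 1) * (1 + q) powr (-(DIM('a) / 2)) *
            exp (-(v * q / (1 + q) * (norm (x - y))^2)))) \<partial>lborel)"
proof -
  let ?g = "\<lambda>t u. ennreal (indicator {0<..} u * (u powr (b - 1) *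
              exp (-(u * (norm (x - t))^2 + v * (norm (t - y))^2))))"
  have "(\<integral>\<^sup>+t. ennreal (exp (-(v * (norm (t - y))^2))) * ennreal (norm (x - t) powr (-(2 * b))) \<partial>lborel)
      = (\<integral>\<^sup>+t. ennreal (1 / Gamma b) * (\<integral>\<^sup>+u. ?g t u \<partial>lborel) \<partial>lborel)"
  proof (rule nn_integral_cong_AE, rule eventually_mono[OF AE_lborel_singleton[of x]])
    fix t assume "t \<noteq> x"
    then have r: "(norm (x - t))^2 > 0" by simp
    have "ennreal (exp (-(v * (norm (t - y))^2))) * ennreal (norm (x - t) powr (-(2 * b)))
        = ennreal (exp (-(v * (norm (t - y))^2))) * ennreal (((norm (x - t))^2) powr (-b))"
      using power2_powr_half[of "norm (x - t)" "-(2 * b)"] by simp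
    also have "\<dots> = ennreal (exp (-(v * (norm (t - y))^2))) * (ennreal (1 / Gamma b) *
        (\<integral>\<^sup>+u. ennreal (indicator {0<..} u * (u powr (b - 1) * exp (-((norm (x - t))^2 * u)))) \<partial>lborel))"
      using b r by (simp only: powr_neg_eq_Gamma_integral)
    also have "\<dots> = ennreal (1 / Gamma b) * (\<integral>\<^sup>+u. ennreal (exp (-(v * (norm (t - y))^2))) *
        ennreal (indicator {0<..} u * (u powr (b - 1) * exp (-((norm (x - t))^2 * u)))) \<partial>lborel)"
      by (subst nn_integral_cmult) (simp_all add: mult_ac)
    also have "\<dots> = ennreal (1 / Gamma b) * (\<integral>\<^sup>+u. ?g t u \<partial>lborel)"
      by (simp add: ennreal_mult'[symmetric] exp_add[symmetric] algebra_simps)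
    finally show "ennreal (exp (-(v * (norm (t - y))^2))) * ennreal (norm (x - t) powr (-(2 * b)))
        = ennreal (1 / Gamma b) * (\<integral>\<^sup>+u. ?g t u \<partial>lborel)" .
  qed
  also have "\<dots> = ennreal (1 / Gamma b) * (\<integral>\<^sup>+t. \<integral>\<^sup>+u. ?g t u \<partial>lborel \<partial>lborel)"
    by (rule nn_integral_cmult) measurable
  also have "(\<integral>\<^sup>+t. \<integral>\<^sup>+u. ?g t u \<partial>lborel \<partial>lborel) = (\<integral>\<^sup>+u. \<integral>\<^sup>+t. ?g t u \<partial>lborel \<partial>lborel)"
    by (rule lborel_pair.Fubini') measurable
  finally show ?thesis
    using v by (simp only: nn_integral_Gamma_weighted_gaussian_product)
qed

lemma nn_integral_Gamma_weight_substituted: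
  fixes a b D H K q :: real
  assumes ab: "a + b = 2 * D" and D: "D > 0" and H: "H > 0" and K: "K \<ge> 0"
  shows "(\<integral>\<^sup>+v. ennreal (indicator {0<..} v * (v powr (a - 1) * exp (-(H * v))) *
            (indicator {0<..} q * (pi powr D * v powr (b - D) * q powr (b - 1) *
              (1 + q) powr (-D) * exp (-(v * q / (1 + q) * K))))) \<partial>lborel)
    = ennreal (pi powr D * Gamma D) *
      ennreal (indicator {0<..} q * (q powr (b - 1) * (H + (H + K) * q) powr (-D)))"
    (is "(\<integral>\<^sup>+v. ennreal (?f v) \<partial>lborel) = _")
proof (cases "q > 0")
  case q: True
  define L where "L = H + q * K / (1 + q)"
  have L: "L > 0" using H K q by (simp add: L_def add_pos_nonneg)
  have pointwise: "?f v = pi powr D * q powr (b - 1) * (1 + q) powr (-D) *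
      (indicator {0<..} v * (v powr (D - 1) * exp (-(L * v))))" for v
  proof (cases "v > 0")
    case True
    have pw: "v powr (a - 1) * v powr (b - D) = v powr (D - 1)"
      using ab by (simp add: powr_add[symmetric] algebra_simps)
    have ex: "exp (-(H * v)) * exp (-(v * q / (1 + q) * K)) = exp (-(L * v))"
      using q by (simp add: L_def exp_add[symmetric] field_simps)
    show ?thesis
      unfolding pw[symmetric] ex[symmetric] using True q by (simp add: mult_ac)
  qed simp
  have "(\<integral>\<^sup>+v. ennreal (?f v) \<partial>lborel)
      = ennreal (pi powr D * q powr (b - 1) * (1 + q) powr (-D)) *
        (\<integral>\<^sup>+v. ennreal (indicator {0<..} v * (v powr (D - 1) * exp (-(L * v)))) \<partial>lborel)"
    unfolding pointwise by (rule nn_integral_ennreal_cmult) (simp, measurable)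
  also have "\<dots> = ennreal (pi powr D * q powr (b - 1) * (1 + q) powr (-D)) * ennreal (Gamma D * L powr (-D))"
    using L D by (simp only: nn_integral_Gamma_kernel)
  finally have "(\<integral>\<^sup>+v. ennreal (?f v) \<partial>lborel)
      = ennreal (pi powr D * q powr (b - 1) * (1 + q) powr (-D)) * ennreal (Gamma D * L powr (-D))" .
  moreover have "pi powr D * q powr (b - 1) * (1 + q) powr (-D) * (Gamma D * L powr (-D))
      = pi powr D * Gamma D * (indicator {0<..} q * (q powr (b - 1) * (H + (H + K) * q) powr (-D)))"
  proof -
    have "(1 + q) * L = H + (H + K) * q" using q by (simp add: L_def field_simps)
    then have "(H + (H + K) * q) powr (-D) = (1 + q) powr (-D) * L powr (-D)"
      using q L by (metis powr_mult less_imp_le add_nonneg_nonneg zero_le_one)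
    then show ?thesis using q by (simp add: mult_ac)
  qed
  moreover have "0 \<le> Gamma D * L powr (-D)"
    "0 \<le> indicator {0<..} q * (q powr (b - 1) * (H + (H + K) * q) powr (-D))"
    using D by (simp_all add: Gamma_real_pos less_imp_le)
  ultimately show ?thesis by (simp only: ennreal_mult''[symmetric])
qed simp

lemma nn_integral_shifted_square_powr_riesz_kernel:
  fixes x y :: "'a::euclidean_space" and b H :: real
  assumes b: "0 < b" "b < DIM('a) / 2" and H: "H > 0"
  shows "(\<integral>\<^sup>+t. ennreal (((norm (t - y))^2 + H) powr (-(DIM('a) - b))) *
            ennreal (norm (x - t) powr (-(2 * b))) \<partial>lborel)
    = ennreal (pi powr (DIM('a) / 2) * Gamma (DIM('a) / 2 - b) / Gamma (DIM('a) - b) *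
        ((norm (x - y))^2 + H) powr (-b) * H powr (-(DIM('a) / 2 - b)))"
proof -
  define D where "D = DIM('a) / 2"
  define a where "a = DIM('a) - b"
  define K where "K = (norm (x - y))^2"
  have a: "a > 0" "a + b = 2 * D" using b by (simp_all add: a_def D_def)
  have "D > 0" "K \<ge> 0" by (simp_all add: D_def K_def)
  have Gamma_pos: "Gamma a > 0" "Gamma b > 0" "Gamma D > 0" "Gamma (D - b) > 0"
    using a b by (auto simp: D_def intro!: Gamma_real_pos)
  let ?w = "\<lambda>v. indicator {0<..} v * (v powr (a - 1) * exp (-(H * v)))"
  let ?G = "\<lambda>v q. indicator {0<..} q * (pi powr D * v powr (b - D) * q powr (b - 1) *
              (1 + q) powr (-D) * exp (-(v * q / (1 + q) * K)))"
  have "(\<integral>\<^sup>+t. ennreal (((norm (t - y))^2 + H) powr (-(DIM('a) - b))) *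
            ennreal (norm (x - t) powr (-(2 * b))) \<partial>lborel)
      = ennreal (1 / Gamma a) * (\<integral>\<^sup>+v. ennreal (?w v) * (\<integral>\<^sup>+t. ennreal (exp (-(v * (norm (t - y))^2))) *
          ennreal (norm (x - t) powr (-(2 * b))) \<partial>lborel) \<partial>lborel)"
    unfolding a_def[symmetric] using a H by (intro nn_integral_shifted_square_powr_Gamma_mixture) measurable
  also have "\<dots> = ennreal (1 / Gamma a) *
      (\<integral>\<^sup>+v. ennreal (?w v) * (ennreal (1 / Gamma b) * (\<integral>\<^sup>+q. ennreal (?G v q) \<partial>lborel)) \<partial>lborel)"
  proof -
    have "ennreal (?w v) * (\<integral>\<^sup>+t. ennreal (exp (-(v * (norm (t - y))^2))) *
          ennreal (norm (x - t) powr (-(2 * b))) \<partial>lborel)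
        = ennreal (?w v) * (ennreal (1 / Gamma b) * (\<integral>\<^sup>+q. ennreal (?G v q) \<partial>lborel))" for v
    proof (cases "v > 0")
      case True
      then show ?thesis by (simp only: nn_integral_gaussian_riesz_kernel[OF b(1) True] D_def K_def)
    qed simp
    then show ?thesis by (simp only:)
  qed
  also have "\<dots> = ennreal (1 / Gamma a) * ennreal (1 / Gamma b) *
      (\<integral>\<^sup>+v. \<integral>\<^sup>+q. ennreal (?w v * ?G v q) \<partial>lborel \<partial>lborel)"
  proof -
    have "ennreal (?w v) * (ennreal (1 / Gamma b) * (\<integral>\<^sup>+q. ennreal (?G v q) \<partial>lborel))
        = ennreal (1 / Gamma b) * (\<integral>\<^sup>+q. ennreal (?w v * ?G v q) \<partial>lborel)" for v
    proof -
      have "(\<integral>\<^sup>+q. ennreal (?w v * ?G v q) \<partial>lborel) = ennreal (?w v) * (\<integral>\<^sup>+q. ennreal (?G v q) \<partial>lborel)"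
        by (rule nn_integral_ennreal_cmult) (simp, measurable)
      then show ?thesis by (simp only: mult.left_commute)
    qed
    moreover have "(\<integral>\<^sup>+v. ennreal (1 / Gamma b) * (\<integral>\<^sup>+q. ennreal (?w v * ?G v q) \<partial>lborel) \<partial>lborel)
        = ennreal (1 / Gamma b) * (\<integral>\<^sup>+v. \<integral>\<^sup>+q. ennreal (?w v * ?G v q) \<partial>lborel \<partial>lborel)"
      by (rule nn_integral_cmult) measurable
    ultimately show ?thesis by (simp only: mult.assoc)
  qed
  also have "(\<integral>\<^sup>+v. \<integral>\<^sup>+q. ennreal (?w v * ?G v q) \<partial>lborel \<partial>lborel)
      = (\<integral>\<^sup>+q. \<integral>\<^sup>+v. ennreal (?w v * ?G v q) \<partial>lborel \<partial>lborel)"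
    by (rule lborel_pair.Fubini') measurable
  also have "\<dots> = ennreal (pi powr D * Gamma D) *
      ennreal (Gamma b * Gamma (D - b) / Gamma D * (H + K) powr (-b) * H powr (-(D - b)))"
  proof -
    have "b < D" "H + K > 0" using b H \<open>K \<ge> 0\<close> by (simp_all add: D_def add_pos_nonneg)
    have "(\<integral>\<^sup>+q. \<integral>\<^sup>+v. ennreal (?w v * ?G v q) \<partial>lborel \<partial>lborel)
        = ennreal (pi powr D * Gamma D) *
          (\<integral>\<^sup>+q. ennreal (indicator {0<..} q * (q powr (b - 1) * (H + (H + K) * q) powr (-D))) \<partial>lborel)"
      unfolding nn_integral_Gamma_weight_substituted[OF a(2) \<open>D > 0\<close> H \<open>K \<ge> 0\<close>]
      by (rule nn_integral_cmult) measurable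
    also have "\<dots> = ennreal (pi powr D * Gamma D) *
        ennreal (Gamma b * Gamma (D - b) / Gamma D * (H + K) powr (-b) * H powr (-(D - b)))"
      by (simp only: nn_integral_Beta_second_kind[OF b(1) \<open>b < D\<close> H \<open>H + K > 0\<close>])
    finally show ?thesis .
  qed
  finally show ?thesis
    using Gamma_pos by (simp add: ennreal_mult''[symmetric] a_def K_def add.commute, simp add: D_def)
qed

section \<open>The normalising constant\<close>

lemma Gamma_legendre_duplication_real:
  fixes z :: real assumes z: "z > 0"
  shows "Gamma (2 * z) = Gamma z * Gamma (z + 1/2) * 2 powr (2 * z - 1) / sqrt pi"
proof -
  have "z \<notin> \<int>\<^sub>\<le>\<^sub>0" "z + 1/2 \<notin> \<int>\<^sub>\<le>\<^sub>0" using z by auto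
  then have "complex_of_real z \<notin> \<int>\<^sub>\<le>\<^sub>0" "complex_of_real (z + 1/2) \<notin> \<int>\<^sub>\<le>\<^sub>0"
    by (auto simp only: of_real_in_nonpos_Ints_iff)
  then have "Gamma (complex_of_real z) * Gamma (complex_of_real (z + 1/2))
      = exp ((1 - 2 * complex_of_real z) * of_real (ln 2)) * of_real (sqrt pi) * Gamma (2 * complex_of_real z)"
    using Gamma_legendre_duplication[of "complex_of_real z"] by simp
  also have "exp ((1 - 2 * complex_of_real z) * of_real (ln 2)) = of_real (2 powr (1 - 2 * z))"
    by (simp add: powr_def exp_of_real[symmetric])
  finally have "complex_of_real (Gamma z * Gamma (z + 1/2))
      = complex_of_real (2 powr (1 - 2 * z) * sqrt pi * Gamma (2 * z))"
    unfolding of_real_mult Gamma_complex_of_real[symmetric] by simp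
  then have "Gamma z * Gamma (z + 1/2) = 2 powr (1 - 2 * z) * sqrt pi * Gamma (2 * z)"
    by (simp only: of_real_eq_iff)
  moreover have "2 powr (1 - 2 * z) * 2 powr (2 * z - 1) = (1::real)"
    by (simp add: powr_add[symmetric])
  ultimately show ?thesis by (simp add: field_simps)
qed

(* The total mass of (|t|^2 + 1) powr (-(d - s/2)) over R^d, by nn_integral_shifted_square_powr. *)
definition bal_const :: "nat \<Rightarrow> real \<Rightarrow> real" where
  "bal_const d s = pi powr (d / 2) * Gamma ((d - s) / 2) / Gamma (d - s / 2)"

lemma bal_const_pos: "0 < s \<Longrightarrow> s < real d \<Longrightarrow> bal_const d s > 0"
  unfolding bal_const_def by (intro divide_pos_pos mult_pos_pos Gamma_real_pos) auto

lemma W_sphere_eq_Gamma: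
  assumes s: "0 < s" "s < real d"
  shows "W_sphere d s = Gamma ((real d + 1) / 2) * Gamma (real d - s) /
           (Gamma ((real d - s + 1) / 2) * Gamma (real d - s / 2))"
proof (cases "d = 2")
  case True
  define z where "z = 1 - s / 2"
  have z: "z > 0" using s True by (simp add: z_def)
  then have "z \<notin> \<int>\<^sub>\<le>\<^sub>0" by auto
  have "(1/2 :: real) \<notin> \<int>\<^sub>\<le>\<^sub>0" by auto
  then have g1: "Gamma ((real d + 1) / 2) = sqrt pi / 2"
    using Gamma_plus1[of "1/2::real"] True by (simp add: Gamma_one_half_real)
  have g2: "Gamma (real d - s / 2) = z * Gamma z"
    using Gamma_plus1[of z] \<open>z \<notin> \<int>\<^sub>\<le>\<^sub>0\<close> True by (simp add: z_def)
  have g3: "(real d - s + 1) / 2 = z + 1/2" "real d - s = 2 * z"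
    using True by (simp_all add: z_def field_simps)
  have w: "W_sphere d s = 2 powr (2 * z - 1) / (2 * z)"
    using True by (simp add: W_sphere_def z_def)
  have "Gamma z > 0" "Gamma (z + 1/2) > 0" using z by (auto intro!: Gamma_real_pos)
  then have "Gamma z \<noteq> 0" "Gamma (z + 1/2) \<noteq> 0" by auto
  then show ?thesis
    unfolding w g1 g2 g3 Gamma_legendre_duplication_real[OF z] using z by (simp add: field_simps)
qed (simp add: W_sphere_def)

lemma omega_d_mult_W_sphere:
  assumes s: "0 < s" "s < real d"
  shows "omega_d d * W_sphere d s = 2 powr (real d - s) * bal_const d s"
proof -
  define z where "z = (real d - s) / 2"
  have z: "z > 0" using s by (simp add: z_def)
  have "Gamma ((real d + 1) / 2) > 0" "Gamma (z + 1/2) > 0" "Gamma (real d - s / 2) > 0" "Gamma z > 0"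
    using s z by (auto intro!: Gamma_real_pos)
  then have nz: "Gamma ((real d + 1) / 2) \<noteq> 0" "Gamma (z + 1/2) \<noteq> 0" "Gamma (real d - s / 2) \<noteq> 0"
    "Gamma z \<noteq> 0" by (metis less_irrefl)+
  have e: "real d - s = 2 * z" "(2 * z + 1) / 2 = z + 1/2" "2 * z / 2 = z" by (simp_all add: z_def)
  have "pi powr ((real d + 1) / 2) = pi powr (real d / 2) * sqrt pi"
    by (simp add: add_divide_distrib powr_add powr_half_sqrt)
  moreover have "(2::real) powr (2 * z) = 2 * 2 powr (2 * z - 1)"
    by (simp add: powr_diff)
  ultimately show ?thesis
    unfolding W_sphere_eq_Gamma[OF s] omega_d_def bal_const_def e Gamma_legendre_duplication_real[OF z]
    using nz by (simp add: field_simps)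
qed

section \<open>The balayage density of a point mass\<close>

lemma dist_emb: "dist (emb x) y = sqrt ((norm (x - fst y))^2 + (snd y)^2)"
  by (cases y) (simp add: emb_def dist_norm norm_Pair)

lemma borel_measurable_bal_density[measurable]:
  "(\<lambda>p. bal_density s (snd p) (fst p :: real^'n)) \<in> borel_measurable (borel \<Otimes>\<^sub>M borel)"
proof -
  have "continuous_on UNIV (\<lambda>p. dist (emb (fst p)) (snd p :: (real^'n) \<times> real))"
    "continuous_on UNIV (\<lambda>p :: (real^'n) \<times> ((real^'n) \<times> real). snd (snd p))"
    unfolding emb_def by (intro continuous_intros)+
  then have [measurable]:
    "(\<lambda>p. dist (emb (fst p)) (snd p :: (real^'n) \<times> real)) \<in> borel_measurable (borel \<Otimes>\<^sub>M borel)"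
    "(\<lambda>p :: (real^'n) \<times> ((real^'n) \<times> real). snd (snd p)) \<in> borel_measurable (borel \<Otimes>\<^sub>M borel)"
    by (simp_all add: borel_prod borel_measurable_continuous_onI)
  show ?thesis unfolding bal_density_def by measurable
qed

lemma borel_measurable_bal_density_sections[measurable]:
  "(\<lambda>x. bal_density s y (x :: real^'n)) \<in> borel_measurable borel"
  "(\<lambda>y. bal_density s y (x :: real^'n)) \<in> borel_measurable borel"
proof -
  have "(\<lambda>x. (x, y)) \<in> borel \<rightarrow>\<^sub>M borel \<Otimes>\<^sub>M borel" "(\<lambda>y. (x, y)) \<in> borel \<rightarrow>\<^sub>M borel \<Otimes>\<^sub>M borel"
    by measurable
  from this[THEN measurable_comp, OF borel_measurable_bal_density[of s]]
  show "(\<lambda>x. bal_density s y (x :: real^'n)) \<in> borel_measurable borel"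
    "(\<lambda>y. bal_density s y (x :: real^'n)) \<in> borel_measurable borel"
    by (simp_all add: o_def)
qed

lemma borel_measurable_riesz_kernel[measurable]:
  "riesz_kernel s (x :: 'a::{metric_space, second_countable_topology}) \<in> borel_measurable borel"
proof -
  have "riesz_kernel s x = (\<lambda>t. if t \<in> {x} then \<infinity> else ennreal (dist x t powr (-s)))"
    by (auto simp: fun_eq_iff riesz_kernel_def)
  then show ?thesis by (simp only:) measurable
qed

lemma bal_density_eq:
  fixes y :: "(real^'n) \<times> real" and x :: "real^'n"
  assumes s: "0 < s" "s < real CARD('n)" and h: "snd y \<noteq> 0"
  shows "bal_density s y x = \<bar>snd y\<bar> powr (real CARD('n) - s) / bal_const CARD('n) s *
           ((norm (x - fst y))^2 + (snd y)^2) powr (-(real CARD('n) - s / 2))"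
proof -
  define Z where "Z = (norm (x - fst y))^2 + (snd y)^2"
  have Z: "Z > 0" using h by (simp add: Z_def add_nonneg_pos)
  have "dist (emb x) y powr (2 * real CARD('n) - s) = Z powr (real CARD('n) - s / 2)"
    unfolding dist_emb Z_def[symmetric] using Z by (simp add: powr_half_sqrt[symmetric] powr_powr field_simps)
  moreover have "(2 * \<bar>snd y\<bar>) powr (real CARD('n) - s)
      = 2 powr (real CARD('n) - s) * \<bar>snd y\<bar> powr (real CARD('n) - s)"
    by (simp add: powr_mult)
  moreover have "bal_const CARD('n) s > 0" using bal_const_pos s by blast
  ultimately show ?thesis
    unfolding Z_def[symmetric] bal_density_def omega_d_mult_W_sphere[OF s]
    using Z by (simp add: powr_minus_divide field_simps)
qed

lemma bal_density_nonneg: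
  assumes "0 < s" "s < real CARD('n)"
  shows "0 \<le> bal_density s y (x :: real^'n)"
  using assms bal_const_pos[OF assms]
  by (simp add: bal_density_def omega_d_mult_W_sphere)

lemma riesz_kernel_emb:
  assumes "snd y \<noteq> 0"
  shows "riesz_kernel s (emb x) y = ennreal (((norm (x - fst y))^2 + (snd y)^2) powr (-(s / 2)))"
proof -
  have "emb x \<noteq> y" using assms by (auto simp: emb_def)
  moreover have "(norm (x - fst y))^2 + (snd y)^2 > 0" using assms by (simp add: add_nonneg_pos)
  ultimately show ?thesis
    by (simp add: riesz_kernel_def dist_emb powr_half_sqrt[symmetric] powr_powr)
qed

lemma nn_integral_bal_density:
  fixes y :: "(real^'n) \<times> real"
  assumes s: "0 < s" "s < real CARD('n)" and h: "snd y \<noteq> 0"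
  shows "(\<integral>\<^sup>+x. ennreal (bal_density s y x) \<partial>lborel) = 1"
proof -
  define c where "c = \<bar>snd y\<bar> powr (real CARD('n) - s) / bal_const CARD('n) s"
  have C: "bal_const CARD('n) s > 0" using bal_const_pos s by blast
  have "(\<integral>\<^sup>+x. ennreal (bal_density s y x) \<partial>lborel)
      = ennreal c *
        (\<integral>\<^sup>+x. ennreal (((norm (x - fst y))^2 + (snd y)^2) powr (-(real CARD('n) - s / 2))) \<partial>lborel)"
    unfolding bal_density_eq[OF s h] c_def[symmetric] using C
    by (intro nn_integral_ennreal_cmult) (simp_all add: c_def)
  also have "(\<integral>\<^sup>+x. ennreal (((norm (x - fst y))^2 + (snd y)^2) powr (-(real CARD('n) - s / 2))) \<partial>lborel)
      = ennreal (bal_const CARD('n) s * ((snd y)^2) powr (-((real CARD('n) - s) / 2)))"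
  proof -
    have e: "real CARD('n) - s / 2 - real DIM(real^'n) / 2 = (real CARD('n) - s) / 2" by simp
    have "real DIM(real^'n) / 2 < real CARD('n) - s / 2" "(snd y)^2 > 0" using s h by simp_all
    from nn_integral_shifted_square_powr[OF this, of "fst y", unfolded e]
    show ?thesis by (simp add: bal_const_def)
  qed
  also have "ennreal c * \<dots> = 1"
    unfolding minus_divide_left power2_powr_half
    using C h by (simp add: c_def ennreal_mult'[symmetric] field_simps powr_add[symmetric])
  finally show ?thesis .
qed

lemma nn_integral_bal_density_riesz_kernel:
  fixes y :: "(real^'n) \<times> real" and x :: "real^'n"
  assumes s: "0 < s" "s < real CARD('n)" and h: "snd y \<noteq> 0"
  shows "(\<integral>\<^sup>+t. ennreal (bal_density s y t) * riesz_kernel s x t \<partial>lborel) = riesz_kernel s (emb x) y"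
proof -
  define c where "c = \<bar>snd y\<bar> powr (real CARD('n) - s) / bal_const CARD('n) s"
  have C: "bal_const CARD('n) s > 0" using bal_const_pos s by blast
  then have "c \<ge> 0" by (simp add: c_def)
  let ?f = "\<lambda>t. ennreal (((norm (t - fst y))^2 + (snd y)^2) powr (-(real CARD('n) - s / 2))) *
              ennreal (norm (x - t) powr (-s))"
  have "AE t in lborel. ennreal (bal_density s y t) * riesz_kernel s x t = ennreal c * ?f t"
    using AE_lborel_singleton[of x] proof eventually_elim
    case (elim t)
    then show ?case
      using \<open>c \<ge> 0\<close>
      by (simp add: riesz_kernel_def dist_norm bal_density_eq[OF s h] c_def[symmetric] ennreal_mult' mult.assoc)
  qed
  then have "(\<integral>\<^sup>+t. ennreal (bal_density s y t) * riesz_kernel s x t \<partial>lborel)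
      = ennreal c * (\<integral>\<^sup>+t. ?f t \<partial>lborel)"
    by (simp add: nn_integral_cong_AE nn_integral_cmult)
  also have "(\<integral>\<^sup>+t. ?f t \<partial>lborel) = ennreal (bal_const CARD('n) s *
      ((norm (x - fst y))^2 + (snd y)^2) powr (-(s / 2)) * ((snd y)^2) powr (-((real CARD('n) - s) / 2)))"
  proof -
    have e: "real DIM(real^'n) - s / 2 = real CARD('n) - s / 2" "2 * (s / 2) = s"
      "real DIM(real^'n) / 2 - s / 2 = (real CARD('n) - s) / 2" by simp_all
    have "0 < s / 2" "s / 2 < real DIM(real^'n) / 2" "(snd y)^2 > 0" using s h by simp_all
    from nn_integral_shifted_square_powr_riesz_kernel[OF this, of "fst y" x, unfolded e]
    show ?thesis by (simp add: bal_const_def)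
  qed
  also have "ennreal c * \<dots> = riesz_kernel s (emb x) y"
    unfolding riesz_kernel_emb[OF h] minus_divide_left power2_powr_half
    using C h by (simp add: c_def ennreal_mult'[symmetric] field_simps powr_add[symmetric])
  finally show ?thesis .
qed

section \<open>Weak balayage\<close>

lemma riesz_cap_zero_empty: "riesz_cap_zero s {}"
  unfolding riesz_cap_zero_def by auto

lemma weak_balayageI:
  assumes "sets \<mu> = sets borel" and "\<And>x. riesz_pot s \<mu> x = riesz_pot s \<sigma> (emb x)"
  shows "weak_balayage s \<sigma> \<mu>"
  using assms by (simp add: weak_balayage_def riesz_cap_zero_empty)

lemma
  fixes y :: "(real^'n) \<times> real"
  assumes s: "0 < s" "s < real CARD('n)" and h: "snd y \<noteq> 0"
  shows weak_balayage_delta_w: "weak_balayage s (return borel y) (delta_w s y)"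
    and emeasure_delta_w: "emeasure (delta_w s y) UNIV = 1"
proof -
  show "weak_balayage s (return borel y) (delta_w s y)"
  proof (rule weak_balayageI)
    fix x
    have "riesz_pot s (delta_w s y) x = (\<integral>\<^sup>+t. ennreal (bal_density s y t) * riesz_kernel s x t \<partial>lborel)"
      unfolding riesz_pot_def delta_w_def by (rule nn_integral_density) measurable
    also have "\<dots> = riesz_pot s (return borel y) (emb x)"
      unfolding nn_integral_bal_density_riesz_kernel[OF s h] riesz_pot_def
      by (rule nn_integral_return[symmetric]) auto
    finally show "riesz_pot s (delta_w s y) x = riesz_pot s (return borel y) (emb x)" .
  qed (simp add: delta_w_def)
  show "emeasure (delta_w s y) UNIV = 1"
    unfolding delta_w_def by (simp add: emeasure_density nn_integral_bal_density[OF s h])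
qed

lemma AE_snd_nonzero_if_msupport_disjoint:
  fixes \<nu> :: "((real^'n) \<times> real) measure"
  assumes sets: "sets \<nu> = sets borel" and supp: "msupport \<nu> \<inter> range emb = {}"
  shows "AE y in \<nu>. snd y \<noteq> 0"
proof -
  let ?F = "{U. open U \<and> emeasure \<nu> U = 0}"
  obtain F' where F': "F' \<subseteq> ?F" "countable F'" "\<Union>F' = \<Union>?F"
    using Lindelof[of ?F] by blast
  have "{y. snd y = 0} \<subseteq> \<Union>?F"
  proof
    fix y :: "(real^'n) \<times> real" assume "y \<in> {y. snd y = 0}"
    then have "y \<notin> msupport \<nu>" using supp by (cases y) (auto simp: emb_def)
    then show "y \<in> \<Union>?F" unfolding msupport_def by (auto simp: not_less)
  qed
  moreover have "(\<Union>U\<in>F'. U) \<in> null_sets \<nu>"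
    using F'(1,2) sets by (intro null_sets_UN') (auto simp: null_sets_def)
  ultimately show ?thesis
    using F'(3) by (intro AE_I'[of "\<Union>U\<in>F'. U"]) auto
qed

definition bal_superposition :: "real \<Rightarrow> ((real^'n) \<times> real) measure \<Rightarrow> (real^'n) measure" where
  "bal_superposition s \<nu> = density lborel (\<lambda>x. \<integral>\<^sup>+y. ennreal (bal_density s y x) \<partial>\<nu>)"

context
  fixes s :: real and \<nu> :: "((real^'n) \<times> real) measure"
  assumes s: "0 < s" "s < real CARD('n)"
    and sets_\<nu>[measurable_cong]: "sets \<nu> = sets borel"
    and finite_\<nu>: "emeasure \<nu> UNIV < \<infinity>"
    and AE_off_plane: "AE y in \<nu>. snd y \<noteq> 0"
begin

lemma finite_measure_\<nu>: "finite_measure \<nu>"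
  using finite_\<nu> sets_eq_imp_space_eq[OF sets_\<nu>] by (intro finite_measureI) auto

lemma pair_sigma_finite_lborel_\<nu>: "pair_sigma_finite lborel \<nu>"
  by (intro pair_sigma_finite.intro lborel.sigma_finite_measure_axioms
      finite_measure.axioms(1) finite_measure_\<nu>)

lemma borel_measurable_bal_superposition_density[measurable]:
  "(\<lambda>x. \<integral>\<^sup>+y. ennreal (bal_density s y x) \<partial>\<nu>) \<in> borel_measurable borel"
  using sigma_finite_measure.borel_measurable_nn_integral[OF finite_measure.axioms(1)[OF finite_measure_\<nu>],
      of "\<lambda>x y. ennreal (bal_density s y x)" borel]
  by measurable

lemma nn_integral_bal_superposition_density:
  "(\<integral>\<^sup>+x. \<integral>\<^sup>+y. ennreal (bal_density s y x) \<partial>\<nu> \<partial>lborel) = emeasure \<nu> UNIV"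
proof -
  have "(\<integral>\<^sup>+x. \<integral>\<^sup>+y. ennreal (bal_density s y x) \<partial>\<nu> \<partial>lborel)
      = (\<integral>\<^sup>+y. \<integral>\<^sup>+x. ennreal (bal_density s y x) \<partial>lborel \<partial>\<nu>)"
    by (rule pair_sigma_finite.Fubini'[OF pair_sigma_finite_lborel_\<nu>, symmetric]) measurable
  also have "\<dots> = (\<integral>\<^sup>+y. 1 \<partial>\<nu>)"
    using AE_off_plane
    by (intro nn_integral_cong_AE) (auto elim!: eventually_mono simp: nn_integral_bal_density[OF s])
  finally show ?thesis
    using sets_eq_imp_space_eq[OF sets_\<nu>] by simp
qed

lemma weak_balayage_bal_superposition: "weak_balayage s \<nu> (bal_superposition s \<nu>)"
proof (rule weak_balayageI)
  fix x :: "real^'n"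
  have "riesz_pot s (bal_superposition s \<nu>) x
      = (\<integral>\<^sup>+t. (\<integral>\<^sup>+y. ennreal (bal_density s y t) \<partial>\<nu>) * riesz_kernel s x t \<partial>lborel)"
    unfolding riesz_pot_def bal_superposition_def
    by (rule nn_integral_density) measurable
  also have "\<dots> = (\<integral>\<^sup>+t. \<integral>\<^sup>+y. ennreal (bal_density s y t) * riesz_kernel s x t \<partial>\<nu> \<partial>lborel)"
    by (intro nn_integral_cong nn_integral_multc[symmetric]) measurable
  also have "\<dots> = (\<integral>\<^sup>+y. \<integral>\<^sup>+t. ennreal (bal_density s y t) * riesz_kernel s x t \<partial>lborel \<partial>\<nu>)"
    by (rule pair_sigma_finite.Fubini'[OF pair_sigma_finite_lborel_\<nu>, symmetric]) measurable
  also have "\<dots> = (\<integral>\<^sup>+y. riesz_kernel s (emb x) y \<partial>\<nu>)"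
    using AE_off_plane by (intro nn_integral_cong_AE)
      (auto elim!: eventually_mono simp: nn_integral_bal_density_riesz_kernel[OF s])
  finally show "riesz_pot s (bal_superposition s \<nu>) x = riesz_pot s \<nu> (emb x)"
    by (simp add: riesz_pot_def)
qed (simp add: bal_superposition_def)

lemma emeasure_bal_superposition_finite: "emeasure (bal_superposition s \<nu>) A < \<infinity>"
proof -
  have "emeasure (bal_superposition s \<nu>) A \<le> emeasure (bal_superposition s \<nu>) UNIV"
    by (rule emeasure_mono) (auto simp: bal_superposition_def)
  also have "\<dots> = emeasure \<nu> UNIV"
    by (simp add: bal_superposition_def emeasure_density nn_integral_bal_superposition_density)
  finally show ?thesis using finite_\<nu> by simp
qed

lemma has_bochner_integral_bal_superposition:
  assumes A: "A \<in> sets borel"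
  shows "has_bochner_integral lborel (\<lambda>x. indicator A x *\<^sub>R (\<integral>y. bal_density s y x \<partial>\<nu>))
           (measure (bal_superposition s \<nu>) A)"
proof -
  let ?G = "\<lambda>x. \<integral>\<^sup>+y. ennreal (bal_density s y x) \<partial>\<nu>"
  have G: "(\<integral>y. bal_density s y x \<partial>\<nu>) = enn2real (?G x)" for x
    using bal_density_nonneg[OF s] by (intro integral_eq_nn_integral) auto
  have "AE x in lborel. ?G x \<noteq> \<infinity>"
    using finite_\<nu> by (intro nn_integral_PInf_AE) (auto simp: nn_integral_bal_superposition_density)
  then have "(\<integral>\<^sup>+x. ennreal (indicator A x *\<^sub>R (\<integral>y. bal_density s y x \<partial>\<nu>)) \<partial>lborel)
      = (\<integral>\<^sup>+x. ?G x * indicator A x \<partial>lborel)"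
    by (intro nn_integral_cong_AE) (auto elim!: eventually_mono simp: G indicator_def less_top)
  also have "\<dots> = emeasure (bal_superposition s \<nu>) A"
  proof -
    have "?G \<in> borel_measurable lborel" by measurable
    then show ?thesis using A by (simp add: bal_superposition_def emeasure_density)
  qed
  also have "\<dots> = ennreal (measure (bal_superposition s \<nu>) A)"
    using emeasure_bal_superposition_finite[of A] by (intro emeasure_eq_ennreal_measure) simp
  finally show ?thesis
    unfolding G using A by (intro has_bochner_integral_nn_integral) (simp_all, measurable)
qed

lemma set_integrable_bal_superposition_density:
  "A \<in> sets borel \<Longrightarrow> set_integrable lborel A (\<lambda>x. \<integral>y. bal_density s y x \<partial>\<nu>)"
  using has_bochner_integral_bal_superposition unfolding set_integrable_def
  by (simp add: has_bochner_integral_iff)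

lemma measure_bal_superposition:
  "A \<in> sets borel \<Longrightarrow> measure (bal_superposition s \<nu>) A = (LINT x:A|lborel. \<integral>y. bal_density s y x \<partial>\<nu>)"
  unfolding set_lebesgue_integral_def
  by (rule has_bochner_integral_integral_eq[OF has_bochner_integral_bal_superposition, symmetric])

end

theorem lemma3p11:
  assumes "CARD('n) \<ge> 2" and "0 < s" and "s < real CARD('n)"
  shows "(\<forall>y :: (real^'n) \<times> real. snd y \<noteq> 0 \<longrightarrow>
            weak_balayage s (return borel y) (delta_w s y) \<and>
            emeasure (delta_w s y) UNIV = 1)
       \<and> (\<forall>(\<nu>p :: ((real^'n) \<times> real) measure) (\<nu>m :: ((real^'n) \<times> real) measure).
            sets \<nu>p = sets borel \<and> sets \<nu>m = sets borel \<and>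
            emeasure \<nu>p UNIV < \<infinity> \<and> emeasure \<nu>m UNIV < \<infinity> \<and>
            (\<exists>N \<in> sets borel. emeasure \<nu>p N = 0 \<and> emeasure \<nu>m (UNIV - N) = 0) \<and>
            (msupport \<nu>p \<union> msupport \<nu>m) \<inter> range emb = {}
          \<longrightarrow> (\<exists>\<mu>p \<mu>m. weak_balayage s \<nu>p \<mu>p \<and> weak_balayage s \<nu>m \<mu>m \<and>
                 (\<forall>A \<in> sets borel. emeasure \<mu>p A < \<infinity> \<and> emeasure \<mu>m A < \<infinity> \<and>
                    measure \<mu>p A - measure \<mu>m A =
                    (LINT x:A|lborel. (\<integral>y. bal_density s y x \<partial>\<nu>p) - (\<integral>y. bal_density s y x \<partial>\<nu>m)))))"
proof -
  have s: "0 < s" "s < real CARD('n)" using assms(2,3) .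
  show ?thesis
  proof (intro conjI allI impI)
    fix y :: "(real^'n) \<times> real" assume "snd y \<noteq> 0"
    then show "weak_balayage s (return borel y) (delta_w s y)" "emeasure (delta_w s y) UNIV = 1"
      by (rule weak_balayage_delta_w[OF s], rule emeasure_delta_w[OF s])
  next
    fix \<nu>p \<nu>m :: "((real^'n) \<times> real) measure"
    assume H: "sets \<nu>p = sets borel \<and> sets \<nu>m = sets borel \<and>
      emeasure \<nu>p UNIV < \<infinity> \<and> emeasure \<nu>m UNIV < \<infinity> \<and>
      (\<exists>N \<in> sets borel. emeasure \<nu>p N = 0 \<and> emeasure \<nu>m (UNIV - N) = 0) \<and>
      (msupport \<nu>p \<union> msupport \<nu>m) \<inter> range emb = {}"
    then have "AE y in \<nu>p. snd y \<noteq> 0" "AE y in \<nu>m. snd y \<noteq> 0"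
      by (auto intro!: AE_snd_nonzero_if_msupport_disjoint)
    with H s have p: "0 < s" "s < real CARD('n)" "sets \<nu>p = sets borel" "emeasure \<nu>p UNIV < \<infinity>"
        "AE y in \<nu>p. snd y \<noteq> 0"
      and m: "0 < s" "s < real CARD('n)" "sets \<nu>m = sets borel" "emeasure \<nu>m UNIV < \<infinity>"
        "AE y in \<nu>m. snd y \<noteq> 0"
      by auto
    show "\<exists>\<mu>p \<mu>m. weak_balayage s \<nu>p \<mu>p \<and> weak_balayage s \<nu>m \<mu>m \<and>
        (\<forall>A \<in> sets borel. emeasure \<mu>p A < \<infinity> \<and> emeasure \<mu>m A < \<infinity> \<and>
           measure \<mu>p A - measure \<mu>m A =
           (LINT x:A|lborel. (\<integral>y. bal_density s y x \<partial>\<nu>p) - (\<integral>y. bal_density s y x \<partial>\<nu>m)))"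
      by (intro exI[of _ "bal_superposition s \<nu>p"] exI[of _ "bal_superposition s \<nu>m"] conjI ballI
          weak_balayage_bal_superposition[OF p] weak_balayage_bal_superposition[OF m]
          emeasure_bal_superposition_finite[OF p] emeasure_bal_superposition_finite[OF m])
        (simp add: measure_bal_superposition[OF p] measure_bal_superposition[OF m]
          set_integrable_bal_superposition_density[OF p] set_integrable_bal_superposition_density[OF m])
  qed
qed

end
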